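(* Let $\varphi(x)=\sum_{i\ge0}\gamma_ix^i\in\mathbb{K}[[x]]$, let $r\in\mathbb{Z}$, and stipulate $\gamma_i=0$ for $i<0$. Then $\varphi\in\mathcal{F}_r$ if and only if the following hold. If $r=2k$ is even: for each $n\ge\max\{0,1-k\}$, $$\gamma_{2n}=\frac{2}{2n+r}\sum_{i=-k}^n\binom{2n+r}{2i+r}B_{2n-2i}\gamma_{2i+1}, \qquad (\ast)$$ and, if $r\le0$, then $\gamma_{1-r}=0$ (with no condition imposed on $\gamma_{-r}$), and, when $r<0$, for $0\le n\le -k-1$, $$\gamma_{2n}=\sum_{i=0}^n\frac{2}{2i+r}\binom{-2i-r}{-2n-r}B_{2n-2i}\gamma_{2i+1}. \qquad (\ast\ast)$$ If $r=2k+1$ is odd: $(\ast)$ holds for each $n\ge\max\{0,-k\}$, and, if $r<0$, $(\ast\ast)$ holds for $0\le n\le -k-1$. In particular these conditions determine all $\gamma_{2i}$ from the $\gamma_{2i+1}$, except $\gamma_{-r}$ when $r\le0$ is even, which is unconstrained.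
   Context: $\mathbb{K}\in\{\mathbb{Q},\mathbb{R},\mathbb{C}\}$. For $r\in\mathbb{Z}$, $\mathcal{F}_r$ denotes the space of $\varphi\in\mathbb{K}[[x]]$ with $\varphi(x/(x-1))=(1-x)^r\varphi(x)$. $B_n$ is the $n$th Bernoulli number, $\frac{t}{e^t-1}=\sum_{n\ge0}B_n\frac{t^n}{n!}$. *)

theory Defs
  imports "HOL-Computational_Algebra.Formal_Power_Series"
begin

definition fps_int_power :: "'a::field fps \<Rightarrow> int \<Rightarrow> 'a fps" where
  "fps_int_power p r = (if r \<ge> 0 then p ^ nat r else inverse (p ^ nat (- r)))"

definition in_F :: "int \<Rightarrow> 'a::field fps \<Rightarrow> bool" where
  "in_F r phi \<longleftrightarrow>
     fps_compose phi (fps_X * inverse (fps_X - 1)) = fps_int_power (1 - fps_X) r * phi"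

definition bernoulli_num :: "nat \<Rightarrow> 'a::field_char_0" where
  "bernoulli_num n = fact n * fps_nth (fps_X / (fps_exp 1 - 1)) n"

definition coeff_int :: "'a::zero fps \<Rightarrow> int \<Rightarrow> 'a" where
  "coeff_int phi i = (if i < 0 then 0 else fps_nth phi (nat i))"

end

theory Submission
  imports Defs
begin

text \<open>Comparing coefficients, \<open>\<phi> \<in> F\<^sub>r\<close> means
  \<open>\<phi>\<^sub>n = (-1)\<^sup>n \<Sum>\<^sub>j binom(-r-j, n-j) \<phi>\<^sub>j\<close> for every \<open>n\<close>.
  For \<open>n \<ge> 1 - r\<close> these equations say exactly that the series
  \<open>B(t) = \<Sum>\<^sub>m \<gamma>\<^sub>m\<^sub>+\<^sub>1\<^sub>-\<^sub>r t\<^sup>m / m!\<close> satisfies \<open>e\<^sup>t B(-t) = -(-1)\<^sup>r B(t)\<close>.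
  Multiplying by the Bernoulli series \<open>t / (e\<^sup>t - 1) = E(t) - t / 2\<close>, where \<open>E\<close> is even,
  splits this into \<open>t B\<^sub>1(t) = 2 E(t) B\<^sub>0(t)\<close>, where
  \<open>B\<^sub>0\<close> and \<open>B\<^sub>1\<close> collect the terms of \<open>B\<close> of the parity of \<open>r\<close> and of the other parity.
  The coefficients of this identity are \<open>(\<ast>)\<close>, and for even \<open>r \<le> 0\<close> its lowest one forces
  \<open>\<gamma>\<^sub>1\<^sub>-\<^sub>r = 0\<close>. For \<open>r = -L \<le> 0\<close> the remaining equations \<open>n \<le> L\<close> involve only
  \<open>\<phi>\<^sub>0, \<dots>, \<phi>\<^sub>L\<close>; with \<open>W(t) = \<Sum>\<^sub>j\<^sub>\<le>\<^sub>L (L-j)! \<phi>\<^sub>j t\<^sup>j\<close> they say that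
  \<open>W(t) - e\<^sup>-\<^sup>t W(-t)\<close> vanishes up to order \<open>L\<close>, and the same Bernoulli multiplication
  turns this into \<open>(\<ast>\<ast>)\<close>.\<close>

unbundle fps_syntax

lemma minus_one_power_diff_nat:
  "j \<le> n \<Longrightarrow> ((-1 :: 'a::comm_ring_1) ^ n) = (-1) ^ j * (-1) ^ (n - j)"
  by (metis le_add_diff_inverse power_add)

lemma minus_one_power_parity_shift:
  assumes "int a - int b = r - 1"
  shows "((-1 :: 'a::comm_ring_1) ^ a) = (if even r then -1 else 1) * (-1) ^ b"
proof -
  have "even a \<longleftrightarrow> (even b \<longleftrightarrow> odd r)"
    using assms by (metis even_of_nat_iff even_add even_diff odd_one diff_add_cancel)
  then show ?thesis
    by (auto simp: minus_one_power_iff)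
qed

lemma fact_times_binomial_div:
  assumes "a = b + c" "1 \<le> a"
  shows "fact b * (of_nat (a choose b) * fact c) / of_nat a = (fact (a - 1) :: 'a::field_char_0)"
proof -
  have "fact b * fact c * (a choose b) = fact a"
    using binomial_fact_lemma[of b a] assms by simp
  then have "fact b * (of_nat (a choose b) * fact c) = (fact a :: 'a)"
    by (metis (mono_tags) of_nat_fact of_nat_mult mult.commute mult.left_commute)
  moreover have "(fact a :: 'a) = of_nat a * fact (a - 1)"
    by (rule fact_reduce) (use assms in arith)
  moreover have "(of_nat a :: 'a) \<noteq> 0"
    using assms(2) by simp
  ultimately show ?thesis
    by simp
qed

lemma sum_if_even_diff_reindex:
  fixes f :: "nat \<Rightarrow> 'a::comm_monoid_add"
  assumes k: "k = r div 2" and M: "int M = 2 * n + r"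
  shows "(\<Sum>j=0..M. if even (int j - r) then f j else 0) = (\<Sum>i\<in>{-k..n}. f (nat (2 * i + r)))"
proof -
  have "(\<Sum>j=0..M. if even (int j - r) then f j else 0) = sum f {j\<in>{0..M}. even (int j - r)}"
    by (rule sum.inter_filter[symmetric]) simp
  also have "\<dots> = (\<Sum>i\<in>{-k..n}. f (nat (2 * i + r)))"
  proof (rule sum.reindex_bij_witness[where i = "\<lambda>i. nat (2 * i + r)" and j = "\<lambda>j. (int j - r) div 2"])
    fix i assume i: "i \<in> {-k..n}"
    then have j: "int (nat (2 * i + r)) = 2 * i + r"
      using k by simp presburger
    then show "(int (nat (2 * i + r)) - r) div 2 = i"
      by simp
    have "even (int (nat (2 * i + r)) - r)"
      by (simp only: j) simp
    moreover have "nat (2 * i + r) \<le> M"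
      using i M by (simp add: nat_le_iff)
    ultimately show "nat (2 * i + r) \<in> {j \<in> {0..M}. even (int j - r)}"
      by (simp only: mem_Collect_eq atLeastAtMost_iff zero_le simp_thms)
  next
    fix j assume "j \<in> {j \<in> {0..M}. even (int j - r)}"
    then show "nat (2 * ((int j - r) div 2) + r) = j" "(int j - r) div 2 \<in> {-k..n}"
      using k M by auto presburger+
  qed simp
  finally show ?thesis .
qed

lemma sum_if_odd_reindex:
  fixes n :: nat
  shows "(\<Sum>j=0..2*n+1. if odd j then g j else (0::'a::comm_monoid_add)) = (\<Sum>i=0..n. g (2*i+1))"
proof -
  have "(\<Sum>j=0..2*n+1. if odd j then g j else 0) = sum g {j\<in>{0..2*n+1}. odd j}"
    by (rule sum.inter_filter[symmetric]) simp
  also have "\<dots> = (\<Sum>i=0..n. g (2*i+1))"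
    by (rule sum.reindex_bij_witness[where i = "\<lambda>i. 2*i+1" and j = "\<lambda>j. j div 2"]) auto
  finally show ?thesis .
qed

lemma sum_int_atLeastAtMost_nat: "(\<Sum>i\<in>{0..int n}. f i) = (\<Sum>i=0..n. f (int i))"
  by (rule sum.reindex_bij_witness[where i = int and j = nat]) auto

section \<open>Reflection and parity parts of power series\<close>

lemma fps_compose_uminus_X_nth [simp]:
  "(f oo - fps_X) $ n = (-1) ^ n * (f :: 'a::comm_ring_1 fps) $ n"
  by (simp add: fps_compose_uminus')

lemma fps_compose_uminus_X_twice [simp]:
  "(f oo - fps_X) oo - fps_X = (f :: 'a::comm_ring_1 fps)"
  by (rule fps_ext) (simp flip: power_mult_distrib)

definition fps_filter :: "(nat \<Rightarrow> bool) \<Rightarrow> 'a::zero fps \<Rightarrow> 'a fps" where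
  "fps_filter P f = Abs_fps (\<lambda>n. if P n then f $ n else 0)"

lemma fps_filter_nth [simp]: "fps_filter P f $ n = (if P n then f $ n else 0)"
  by (simp add: fps_filter_def)

lemma fps_filter_even_plus_odd: "fps_filter even f + fps_filter odd f = (f :: 'a::monoid_add fps)"
  by (rule fps_ext) simp

lemma fps_compose_uminus_X_eq_filter:
  "f oo - fps_X = fps_filter even f - fps_filter odd (f :: 'a::comm_ring_1 fps)"
  by (rule fps_ext) simp

lemma fps_filter_even_reflect [simp]:
  "fps_filter even (f oo - fps_X) = fps_filter even (f :: 'a::comm_ring_1 fps)"
  by (rule fps_ext) simp

lemma fps_filter_odd_reflect [simp]:
  "fps_filter odd (f oo - fps_X) = - fps_filter odd (f :: 'a::comm_ring_1 fps)"
  by (rule fps_ext) simp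

lemma fps_mult_unit_low_coeffs_zero_iff:
  fixes u f :: "'a::field fps"
  assumes "u $ 0 \<noteq> 0"
  shows "(\<forall>m\<le>L. (u * f) $ m = 0) \<longleftrightarrow> (\<forall>m\<le>L. f $ m = 0)"
proof -
  have vanish: "\<forall>m\<le>L. (v * g) $ m = 0" if "\<forall>m\<le>L. g $ m = 0" for v g :: "'a fps"
    using that by (auto simp: fps_mult_nth intro!: sum.neutral)
  have inv: "inverse u * (u * f) = f"
    using assms by (simp add: mult.assoc[symmetric] inverse_mult_eq_1)
  show ?thesis
  proof
    assume "\<forall>m\<le>L. (u * f) $ m = 0"
    then have "\<forall>m\<le>L. (inverse u * (u * f)) $ m = 0"
      by (rule vanish)
    then show "\<forall>m\<le>L. f $ m = 0"
      by (simp only: inv)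
  qed (rule vanish)
qed

section \<open>The Bernoulli generating function\<close>

definition bernoulli_fps :: "'a::field_char_0 fps" where
  "bernoulli_fps = fps_X / (fps_exp 1 - 1)"

lemma bernoulli_num_conv_fps: "bernoulli_num n = fact n * bernoulli_fps $ n"
  by (simp add: bernoulli_num_def bernoulli_fps_def)

lemma exp_minus_one_times_bernoulli_fps:
  "(fps_exp 1 - 1) * bernoulli_fps = (fps_X :: 'a::field_char_0 fps)"
proof -
  have "subdegree (fps_exp 1 - 1 :: 'a fps) = 1"
    by (rule subdegreeI) auto
  moreover have "fps_exp 1 - 1 \<noteq> (0 :: 'a fps)"
    using calculation by auto
  ultimately have "(fps_exp 1 - 1) dvd (fps_X :: 'a fps)"
    by (simp add: fps_dvd_iff)
  then show ?thesis
    by (simp add: bernoulli_fps_def dvd_mult_div_cancel)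
qed

lemma exp_minus_one_nonzero: "fps_exp 1 - 1 \<noteq> (0 :: 'a::field_char_0 fps)"
  using exp_minus_one_times_bernoulli_fps[where 'a='a] by auto

lemma bernoulli_fps_nth_0 [simp]: "bernoulli_fps $ 0 = (1 :: 'a::field_char_0)"
  using arg_cong[OF exp_minus_one_times_bernoulli_fps[where 'a='a], of "\<lambda>f. f $ 1"]
  by (simp add: fps_mult_nth_1)

lemma bernoulli_fps_nonzero: "bernoulli_fps \<noteq> (0 :: 'a::field_char_0 fps)"
  by (metis bernoulli_fps_nth_0 fps_zero_nth zero_neq_one)

text \<open>Composing \<open>(e\<^sup>x - 1) B(x) = x\<close> with \<open>-x\<close> and multiplying by \<open>e\<^sup>x\<close> gives
  \<open>(e\<^sup>x - 1) B(-x) = x e\<^sup>x = (e\<^sup>x - 1) (B(x) + x)\<close>.\<close>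
lemma bernoulli_fps_reflect:
  "bernoulli_fps oo - fps_X = bernoulli_fps + (fps_X :: 'a::field_char_0 fps)"
proof -
  let ?B = "bernoulli_fps :: 'a fps" and ?e = "fps_exp 1 :: 'a fps"
  have "(fps_exp (-1) - 1) * (?B oo - fps_X) = - fps_X"
    using arg_cong[OF exp_minus_one_times_bernoulli_fps[where 'a='a], of "\<lambda>f. f oo - fps_X"]
    by (simp add: fps_compose_mult_distrib fps_compose_sub_distrib)
  then have "?e * (fps_exp (-1) - 1) * (?B oo - fps_X) = - ?e * fps_X"
    by (simp add: mult.assoc)
  moreover have "?e * fps_exp (-1) = 1"
    by (simp flip: fps_exp_add_mult)
  ultimately have "(?e - 1) * (?B oo - fps_X) = ?e * fps_X"
    by (simp add: algebra_simps)
  also have "\<dots> = (?e - 1) * (?B + fps_X)"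
    using exp_minus_one_times_bernoulli_fps[where 'a='a] by (simp add: algebra_simps)
  finally show ?thesis
    using exp_minus_one_nonzero[where 'a='a] by simp
qed

lemma bernoulli_fps_nth_odd:
  "odd n \<Longrightarrow> bernoulli_fps $ n = (if n = 1 then - 1 / 2 else (0 :: 'a::field_char_0))"
  using arg_cong[OF bernoulli_fps_reflect[where 'a='a], of "\<lambda>f. f $ n"]
  by (auto simp: field_simps) (metis add.commute add_eq_0_iff)

lemma exp_plus_one_times_bernoulli_fps:
  "(fps_exp 1 + 1) * bernoulli_fps = 2 * fps_filter even (bernoulli_fps :: 'a::field_char_0 fps)"
proof -
  have "fps_filter even bernoulli_fps = bernoulli_fps + fps_const (1 / 2) * (fps_X :: 'a fps)"
    by (rule fps_ext) (auto simp: bernoulli_fps_nth_odd)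
  moreover have "(fps_exp 1 + 1) * bernoulli_fps = fps_X + 2 * (bernoulli_fps :: 'a fps)"
    using exp_minus_one_times_bernoulli_fps[where 'a='a] by (simp add: algebra_simps)
  moreover have "2 * fps_const (1 / 2) = (1 :: 'a fps)"
    by (simp add: fps_numeral_fps_const)
  ultimately show ?thesis
    by (simp add: distrib_left mult.assoc[symmetric])
qed

lemma bernoulli_fps_times_exp_reflect_minus:
  fixes A :: "'a::field_char_0 fps"
  shows "bernoulli_fps * (fps_exp 1 * (A oo - fps_X) - A)
       = fps_X * fps_filter even A - 2 * fps_filter even bernoulli_fps * fps_filter odd A"
proof -
  have "bernoulli_fps * (fps_exp 1 * (A oo - fps_X) - A)
      = ((fps_exp 1 - 1) * bernoulli_fps) * fps_filter even A - ((fps_exp 1 + 1) * bernoulli_fps) * fps_filter odd A"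
    unfolding fps_compose_uminus_X_eq_filter
    by (subst (3) fps_filter_even_plus_odd[of A, symmetric]) (simp add: algebra_simps)
  then show ?thesis
    by (simp only: exp_minus_one_times_bernoulli_fps exp_plus_one_times_bernoulli_fps)
qed

lemma bernoulli_fps_times_exp_reflect_plus:
  fixes A :: "'a::field_char_0 fps"
  shows "bernoulli_fps * (fps_exp 1 * (A oo - fps_X) + A)
       = 2 * fps_filter even bernoulli_fps * fps_filter even A - fps_X * fps_filter odd A"
proof -
  have "bernoulli_fps * (fps_exp 1 * (A oo - fps_X) + A)
      = ((fps_exp 1 + 1) * bernoulli_fps) * fps_filter even A - ((fps_exp 1 - 1) * bernoulli_fps) * fps_filter odd A"
    unfolding fps_compose_uminus_X_eq_filter
    by (subst (3) fps_filter_even_plus_odd[of A, symmetric]) (simp add: algebra_simps)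
  then show ?thesis
    by (simp only: exp_minus_one_times_bernoulli_fps exp_plus_one_times_bernoulli_fps)
qed

lemma exp_mult_reflect_eq_iff:
  fixes A :: "'a::field_char_0 fps"
  shows "fps_exp 1 * (A oo - fps_X) = A
     \<longleftrightarrow> fps_X * fps_filter even A = 2 * fps_filter even bernoulli_fps * fps_filter odd A"
proof -
  have "fps_exp 1 * (A oo - fps_X) = A \<longleftrightarrow> bernoulli_fps * (fps_exp 1 * (A oo - fps_X) - A) = 0"
    using bernoulli_fps_nonzero[where 'a='a] by simp
  then show ?thesis
    by (simp add: bernoulli_fps_times_exp_reflect_minus)
qed

lemma exp_mult_reflect_eq_uminus_iff:
  fixes A :: "'a::field_char_0 fps"
  shows "fps_exp 1 * (A oo - fps_X) = - A
     \<longleftrightarrow> fps_X * fps_filter odd A = 2 * fps_filter even bernoulli_fps * fps_filter even A"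
proof -
  have "fps_exp 1 * (A oo - fps_X) = - A \<longleftrightarrow> bernoulli_fps * (fps_exp 1 * (A oo - fps_X) + A) = 0"
    using bernoulli_fps_nonzero[where 'a='a] by (simp add: eq_neg_iff_add_eq_0)
  then show ?thesis
    by (simp add: bernoulli_fps_times_exp_reflect_plus eq_commute[of "fps_X * _"])
qed

lemma X_mult_filter_even_plus_bernoulli_mult_filter_odd_nth_even:
  fixes A :: "'a::field_char_0 fps"
  assumes "even m"
  shows "(fps_X * fps_filter even A + 2 * fps_filter even bernoulli_fps * fps_filter odd A) $ m = 0"
proof -
  have "(fps_X * fps_filter even A) $ m = 0"
    using assms by (cases m) auto
  moreover have "(fps_filter even bernoulli_fps * fps_filter odd A) $ m = 0"
    unfolding fps_mult_nth using assms by (intro sum.neutral) auto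
  ultimately show ?thesis
    by (simp add: mult.assoc fps_numeral_fps_const)
qed

section \<open>The defining equation coefficientwise\<close>

lemma fps_binomial_reflect_add:
  "fps_binomial (a + b) oo - fps_X
     = (fps_binomial a oo - fps_X) * (fps_binomial b oo - fps_X :: 'a::field_char_0 fps)"
  by (simp add: fps_binomial_add_mult fps_compose_mult_distrib)

lemma fps_binomial_reflect_inverse:
  "inverse (fps_binomial a oo - fps_X) = fps_binomial (- a) oo - (fps_X :: 'a::field_char_0 fps)"
  by (rule fps_inverse_unique) (simp flip: fps_binomial_reflect_add)

lemma fps_binomial_reflect_of_nat:
  "fps_binomial (of_nat n) oo - fps_X = (1 - fps_X :: 'a::field_char_0 fps) ^ n"
  by (simp add: fps_binomial_of_nat fps_compose_add_distrib flip: fps_compose_power)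

lemma fps_int_power_one_minus_X:
  "fps_int_power (1 - fps_X) r = fps_binomial (of_int r) oo - (fps_X :: 'a::field_char_0 fps)"
proof (cases "r \<ge> 0")
  case True
  then show ?thesis
    using fps_binomial_reflect_of_nat[of "nat r", where 'a='a] by (simp add: fps_int_power_def)
next
  case False
  then have "(of_int r :: 'a) = - of_nat (nat (- r))"
    by simp
  with False show ?thesis
    by (simp add: fps_int_power_def fps_binomial_reflect_inverse
        flip: fps_binomial_reflect_of_nat)
qed

lemma X_over_X_minus_1_power:
  "(fps_X * inverse (fps_X - 1)) ^ j
     = (-1) ^ j * fps_X ^ j * (fps_binomial (- of_nat j) oo - (fps_X :: 'a::field_char_0 fps))"
proof -
  have "fps_binomial 1 oo - fps_X = (1 - fps_X :: 'a fps)"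
    using fps_binomial_reflect_of_nat[of 1, where 'a='a] by simp
  then have "inverse (1 - fps_X) = (fps_binomial (- 1) oo - fps_X :: 'a fps)"
    using fps_binomial_reflect_inverse[of "1::'a"] by simp
  then have "inverse (fps_X - 1) = - (fps_binomial (- 1) oo - fps_X :: 'a fps)"
    by (metis fps_inverse_minus minus_diff_eq)
  then have "fps_X * inverse (fps_X - 1) = (-1) * fps_X * (fps_binomial (- 1) oo - fps_X :: 'a fps)"
    by simp
  then have "(fps_X * inverse (fps_X - 1)) ^ j
      = (-1) ^ j * fps_X ^ j * (fps_binomial (- 1) oo - fps_X :: 'a fps) ^ j"
    by (simp only: power_mult_distrib)
  moreover have "(fps_binomial (- 1) oo - fps_X :: 'a fps) ^ j = fps_binomial (- of_nat j) oo - fps_X"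
  proof (induction j)
    case (Suc j)
    have "- of_nat (Suc j) = (-1 :: 'a) + - of_nat j"
      by simp
    then show ?case
      by (simp only: power_Suc Suc.IH fps_binomial_reflect_add)
  qed simp
  ultimately show ?thesis
    by simp
qed

lemma fps_binomial_reflect_mult_X_over_X_minus_1_power_nth:
  fixes c :: "'a::field_char_0"
  shows "((fps_binomial c oo - fps_X) * (fps_X * inverse (fps_X - 1)) ^ j) $ m
       = (if m < j then 0 else (-1) ^ m * ((c - of_nat j) gchoose (m - j)))"
proof -
  have "(fps_binomial c oo - fps_X) * (fps_X * inverse (fps_X - 1)) ^ j
      = (-1) ^ j * (fps_X ^ j * ((fps_binomial c oo - fps_X) * (fps_binomial (- of_nat j) oo - fps_X)))"
    by (simp add: X_over_X_minus_1_power mult_ac)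
  also have "(fps_binomial c oo - fps_X) * (fps_binomial (- of_nat j) oo - fps_X)
      = fps_binomial (c - of_nat j) oo - (fps_X :: 'a fps)"
    by (simp flip: fps_binomial_reflect_add)
  also have "(-1) ^ j = fps_const ((-1) ^ j :: 'a)"
    by (metis fps_const_1_eq_1 fps_const_neg fps_const_power)
  finally show ?thesis
    by (auto simp: fps_X_power_mult_nth simp flip: power_add)
qed

lemma eq_mult_iff_mult_eq:
  fixes a b u v :: "'a::comm_monoid_mult"
  assumes "u * v = 1"
  shows "a = v * b \<longleftrightarrow> u * a = b"
proof
  assume "a = v * b"
  then show "u * a = b"
    by (simp add: assms mult.assoc[symmetric])
next
  assume "u * a = b"
  then show "a = v * b"
    by (metis assms mult.assoc mult.commute mult_1)
qed

lemma in_F_iff_binomial: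
  "in_F r phi \<longleftrightarrow>
     (fps_binomial (- of_int r) oo - fps_X) * (phi oo fps_X * inverse (fps_X - 1)) = (phi :: 'a::field_char_0 fps)"
proof -
  let ?G = "\<lambda>a. fps_binomial a oo - (fps_X :: 'a fps)"
  have inv: "?G (- of_int r) * ?G (of_int r) = 1"
    by (simp flip: fps_binomial_reflect_add)
  have "in_F r phi \<longleftrightarrow> phi oo fps_X * inverse (fps_X - 1) = ?G (of_int r) * phi"
    by (simp add: in_F_def fps_int_power_one_minus_X)
  also have "\<dots> \<longleftrightarrow> ?G (- of_int r) * (phi oo fps_X * inverse (fps_X - 1)) = phi"
    using inv by (rule eq_mult_iff_mult_eq)
  finally show ?thesis .
qed

definition in_F_coeff_eq :: "int \<Rightarrow> 'a::field_char_0 fps \<Rightarrow> nat \<Rightarrow> bool" where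
  "in_F_coeff_eq r phi n \<longleftrightarrow>
     phi $ n = (-1) ^ n * (\<Sum>j=0..n. ((- of_int r - of_nat j) gchoose (n - j)) * phi $ j)"

lemma in_F_iff_coeff_eq: "in_F r phi \<longleftrightarrow> (\<forall>n. in_F_coeff_eq r phi n)"
  for phi :: "'a::field_char_0 fps"
proof -
  let ?G = "fps_binomial (- of_int r) oo - (fps_X :: 'a fps)"
  let ?\<sigma> = "fps_X * inverse (fps_X - 1) :: 'a fps"
  have coeff: "(?G * (phi oo ?\<sigma>)) $ n
      = (-1) ^ n * (\<Sum>j=0..n. ((- of_int r - of_nat j) gchoose (n - j)) * phi $ j)" for n
  proof -
    have "(?G * (phi oo ?\<sigma>)) $ n = (\<Sum>i=0..n. ?G $ i * (\<Sum>j=0..n. phi $ j * (?\<sigma> ^ j) $ (n - i)))"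
    proof -
      have "(?\<sigma> ^ j) $ m = 0" if "m < j" for j m
        using fps_binomial_reflect_mult_X_over_X_minus_1_power_nth[where 'a='a, of 0 j m] that by simp
      then have "(\<Sum>j=0..n-i. phi $ j * (?\<sigma> ^ j) $ (n - i)) = (\<Sum>j=0..n. phi $ j * (?\<sigma> ^ j) $ (n - i))"
        if "i \<le> n" for i
        by (intro sum.mono_neutral_left) auto
      then show ?thesis
        by (simp add: fps_mult_nth fps_compose_nth)
    qed
    also have "\<dots> = (\<Sum>j=0..n. phi $ j * (\<Sum>i=0..n. ?G $ i * (?\<sigma> ^ j) $ (n - i)))"
    proof -
      have "(\<Sum>i=0..n. ?G $ i * (\<Sum>j=0..n. phi $ j * (?\<sigma> ^ j) $ (n - i)))
          = (\<Sum>i=0..n. \<Sum>j=0..n. phi $ j * (?G $ i * (?\<sigma> ^ j) $ (n - i)))"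
        by (simp add: sum_distrib_left mult.left_commute)
      also have "\<dots> = (\<Sum>j=0..n. \<Sum>i=0..n. phi $ j * (?G $ i * (?\<sigma> ^ j) $ (n - i)))"
        by (rule sum.swap)
      finally show ?thesis
        by (simp add: sum_distrib_left)
    qed
    also have "\<dots> = (\<Sum>j=0..n. phi $ j * (?G * ?\<sigma> ^ j) $ n)"
      by (simp add: fps_mult_nth)
    also have "\<dots> = (\<Sum>j=0..n. phi $ j * ((-1) ^ n * ((- of_int r - of_nat j) gchoose (n - j))))"
      by (intro sum.cong refl) (simp add: fps_binomial_reflect_mult_X_over_X_minus_1_power_nth)
    finally show ?thesis
      by (simp add: sum_distrib_left algebra_simps)
  qed
  show ?thesis
    unfolding in_F_iff_binomial fps_eq_iff in_F_coeff_eq_def coeff by (intro iff_allI) (rule eq_commute)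
qed

section \<open>The equations of index at least 1 - r\<close>

lemma coeff_int_of_nat [simp]: "coeff_int phi (int n) = phi $ n"
  by (simp add: coeff_int_def)

lemma coeff_int_eq_nth: "i = int n \<Longrightarrow> coeff_int phi i = phi $ n"
  by simp

lemma coeff_int_neg: "i < 0 \<Longrightarrow> coeff_int phi i = 0"
  by (simp add: coeff_int_def)

text \<open>Upper negation: \<open>(-1)\<^sup>n binom(-r-j, n-j) = (-1)\<^sup>j binom(n+r-1, n-j)\<close>, an ordinary
  binomial coefficient since \<open>n + r - 1 \<ge> 0\<close>.\<close>
lemma in_F_coeff_eq_tail:
  fixes phi :: "'a::field_char_0 fps"
  assumes "1 - r \<le> int n"
  shows "in_F_coeff_eq r phi n \<longleftrightarrow>
           phi $ n = (\<Sum>j=0..n. (-1) ^ j * of_nat (nat (int n + r - 1) choose (n - j)) * phi $ j)"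
proof -
  let ?N = "nat (int n + r - 1)"
  have "(-1) ^ n * ((- of_int r - of_nat j) gchoose (n - j)) = (-1) ^ j * (of_nat (?N choose (n - j)) :: 'a)"
    if "j \<le> n" for j
  proof -
    have "(- of_int r - of_nat j :: 'a) gchoose (n - j)
        = (-1) ^ (n - j) * ((of_int r + of_nat j + of_nat (n - j) - 1) gchoose (n - j))"
      by (simp add: gbinomial_minus[symmetric])
    also have "of_int r + of_nat j + of_nat (n - j) - 1 = (of_nat ?N :: 'a)"
      using that assms by (simp add: of_nat_diff)
    finally have "(- of_int r - of_nat j :: 'a) gchoose (n - j) = (-1) ^ (n - j) * of_nat (?N choose (n - j))"
      by (simp add: binomial_gbinomial)
    moreover have "(-1) ^ n * (-1) ^ (n - j) = ((-1) ^ j :: 'a)"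
    proof -
      have "(-1 :: 'a) ^ (n - j) * (-1) ^ (n - j) = 1"
        by (simp flip: power_mult_distrib)
      then show ?thesis
        by (simp add: minus_one_power_diff_nat[OF that] mult.assoc)
    qed
    ultimately show ?thesis
      by (simp add: mult.assoc[symmetric])
  qed
  then show ?thesis
    unfolding in_F_coeff_eq_def sum_distrib_left
    by (intro arg_cong2[where f = "(=)"] refl sum.cong) (simp_all add: mult.assoc[symmetric])
qed

text \<open>The exponential generating function of the coefficients of \<open>x\<^sup>r\<^sup>-\<^sup>1 \<phi>(x)\<close>.\<close>
definition shifted_borel :: "int \<Rightarrow> 'a::field_char_0 fps \<Rightarrow> 'a fps" where
  "shifted_borel r phi = Abs_fps (\<lambda>m. coeff_int phi (int m + 1 - r) / fact m)"

lemma shifted_borel_nth: "shifted_borel r phi $ m = coeff_int phi (int m + 1 - r) / fact m"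
  by (simp add: shifted_borel_def)

lemma fact_times_exp_mult_shifted_borel_reflect_nth:
  "fact N * (fps_exp 1 * (shifted_borel r phi oo - fps_X)) $ N
     = (\<Sum>m=0..N. (-1) ^ m * of_nat (N choose m) * coeff_int phi (int m + 1 - r))"
proof -
  have "fact N * (fps_exp 1 * (shifted_borel r phi oo - fps_X)) $ N
      = (\<Sum>m=0..N. fact N * ((shifted_borel r phi oo - fps_X) $ m * fps_exp 1 $ (N - m)))"
    by (simp add: fps_mult_nth sum_distrib_left mult.commute[of "fps_exp 1"])
  also have "\<dots> = (\<Sum>m=0..N. (-1) ^ m * of_nat (N choose m) * coeff_int phi (int m + 1 - r))"
    by (intro sum.cong refl) (simp add: shifted_borel_nth binomial_fact)
  finally show ?thesis .
qed

text \<open>Substituting \<open>d = N - m = n - j\<close> in both sums; the terms with \<open>d > min N n\<close> vanish on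
  either side.\<close>
lemma alternating_binomial_sum_shift:
  fixes phi :: "'a::field_char_0 fps"
  assumes n: "int n = int N + 1 - r"
  shows "(\<Sum>m=0..N. (-1) ^ m * of_nat (N choose m) * coeff_int phi (int m + 1 - r))
       = (if even r then -1 else 1) * (\<Sum>j=0..n. (-1) ^ j * of_nat (N choose (n - j)) * phi $ j)"
proof -
  let ?T = "\<lambda>d. of_nat (N choose d) * coeff_int phi (int n - int d)"
  have L: "(\<Sum>m=0..N. (-1) ^ m * of_nat (N choose m) * coeff_int phi (int m + 1 - r))
      = (\<Sum>d=0..N+n. (-1) ^ (N - d) * ?T d)"
  proof -
    have "(\<Sum>m=0..N. (-1) ^ m * of_nat (N choose m) * coeff_int phi (int m + 1 - r))
        = (\<Sum>d=0..N. (-1) ^ (N - d) * of_nat (N choose (N - d)) * coeff_int phi (int (N - d) + 1 - r))"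
      by (subst sum.atLeastAtMost_rev) simp
    also have "\<dots> = (\<Sum>d=0..N. (-1) ^ (N - d) * ?T d)"
      by (intro sum.cong refl) (auto simp: binomial_symmetric[symmetric] of_nat_diff n mult.assoc
          intro!: arg_cong[where f = "coeff_int phi"])
    also have "\<dots> = (\<Sum>d=0..N+n. (-1) ^ (N - d) * ?T d)"
      by (rule sum.mono_neutral_left) auto
    finally show ?thesis .
  qed
  have R: "(\<Sum>j=0..n. (-1) ^ j * of_nat (N choose (n - j)) * phi $ j)
      = (\<Sum>d=0..N+n. (-1) ^ (n - d) * ?T d)"
  proof -
    have "(\<Sum>j=0..n. (-1) ^ j * of_nat (N choose (n - j)) * phi $ j)
        = (\<Sum>d=0..n. (-1) ^ (n - d) * of_nat (N choose (n - (n - d))) * phi $ (n - d))"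
      by (subst sum.atLeastAtMost_rev) simp
    also have "\<dots> = (\<Sum>d=0..n. (-1) ^ (n - d) * ?T d)"
      by (intro sum.cong refl) (auto simp: of_nat_diff mult.assoc simp flip: coeff_int_of_nat)
    also have "\<dots> = (\<Sum>d=0..N+n. (-1) ^ (n - d) * ?T d)"
      by (rule sum.mono_neutral_left) (auto simp: coeff_int_neg)
    finally show ?thesis .
  qed
  have sign: "(-1) ^ (N - d) * ?T d = (if even r then -1 else 1) * ((-1) ^ (n - d) * ?T d)" for d
  proof (cases "d \<le> N \<and> d \<le> n")
    case True
    then have "int (N - d) - int (n - d) = r - 1"
      using n by (simp add: of_nat_diff)
    then show ?thesis
      by (simp add: minus_one_power_parity_shift[of "N - d" "n - d" r])
  next
    case False
    then show ?thesis
      by (auto simp: coeff_int_neg)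
  qed
  show ?thesis
    by (simp only: L R sum_distrib_left sign)
qed

lemma exp_mult_shifted_borel_reflect_nth_iff:
  fixes phi :: "'a::field_char_0 fps"
  shows "(fps_exp 1 * (shifted_borel r phi oo - fps_X)) $ N
           = (if even r then - shifted_borel r phi else shifted_borel r phi) $ N
     \<longleftrightarrow> (0 \<le> int N + 1 - r \<longrightarrow> in_F_coeff_eq r phi (nat (int N + 1 - r)))"
proof -
  let ?s = "if even r then -1 else 1 :: 'a"
  let ?S = "\<Sum>m=0..N. (-1) ^ m * of_nat (N choose m) * coeff_int phi (int m + 1 - r)"
  have "(if even r then - shifted_borel r phi else shifted_borel r phi) $ N = ?s * shifted_borel r phi $ N"
    by simp
  then have "(fps_exp 1 * (shifted_borel r phi oo - fps_X)) $ N
           = (if even r then - shifted_borel r phi else shifted_borel r phi) $ N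
      \<longleftrightarrow> fact N * (fps_exp 1 * (shifted_borel r phi oo - fps_X)) $ N
           = fact N * (?s * shifted_borel r phi $ N)"
    by simp
  also have "\<dots> \<longleftrightarrow> ?S = ?s * coeff_int phi (int N + 1 - r)"
    unfolding fact_times_exp_mult_shifted_borel_reflect_nth by (simp add: shifted_borel_nth)
  also have "\<dots> \<longleftrightarrow> (0 \<le> int N + 1 - r \<longrightarrow> in_F_coeff_eq r phi (nat (int N + 1 - r)))"
  proof (cases "0 \<le> int N + 1 - r")
    case False
    then have "?S = 0"
      by (intro sum.neutral) (auto simp: coeff_int_neg)
    with False show ?thesis
      by (simp add: coeff_int_neg)
  next
    case True
    define n where "n = nat (int N + 1 - r)"
    then have n: "int n = int N + 1 - r"
      using True by simp
    have "?S = ?s * (\<Sum>j=0..n. (-1) ^ j * of_nat (N choose (n - j)) * phi $ j)"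
      by (rule alternating_binomial_sum_shift[OF n])
    moreover have "in_F_coeff_eq r phi n
        \<longleftrightarrow> (\<Sum>j=0..n. (-1) ^ j * of_nat (N choose (n - j)) * phi $ j) = phi $ n"
      using in_F_coeff_eq_tail[of r n phi] n by auto
    moreover have "coeff_int phi (int N + 1 - r) = phi $ n"
      by (metis n coeff_int_of_nat)
    moreover have "?s \<noteq> 0"
      by simp
    ultimately show ?thesis
      using True unfolding n_def[symmetric] by (simp only: mult_cancel_left simp_thms)
  qed
  finally show ?thesis .
qed

lemma in_F_coeff_eq_tail_iff:
  fixes phi :: "'a::field_char_0 fps"
  shows "(\<forall>n. 1 - r \<le> int n \<longrightarrow> in_F_coeff_eq r phi n)
     \<longleftrightarrow> fps_exp 1 * (shifted_borel r phi oo - fps_X)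
           = (if even r then - shifted_borel r phi else shifted_borel r phi)"
proof -
  have "(\<forall>n. 1 - r \<le> int n \<longrightarrow> in_F_coeff_eq r phi n)
      \<longleftrightarrow> (\<forall>N. 0 \<le> int N + 1 - r \<longrightarrow> in_F_coeff_eq r phi (nat (int N + 1 - r)))"
  proof (intro iffI allI impI)
    fix n
    assume "\<forall>N. 0 \<le> int N + 1 - r \<longrightarrow> in_F_coeff_eq r phi (nat (int N + 1 - r))" "1 - r \<le> int n"
    moreover from \<open>1 - r \<le> int n\<close> have "int (nat (int n + r - 1)) + 1 - r = int n"
      by simp
    ultimately show "in_F_coeff_eq r phi n"
      by (metis nat_int of_nat_0_le_iff)
  qed simp
  then show ?thesis
    unfolding fps_eq_iff exp_mult_shifted_borel_reflect_nth_iff .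
qed

lemma exp_mult_shifted_borel_reflect_iff_filter:
  fixes phi :: "'a::field_char_0 fps"
  shows "fps_exp 1 * (shifted_borel r phi oo - fps_X)
           = (if even r then - shifted_borel r phi else shifted_borel r phi)
     \<longleftrightarrow> fps_X * fps_filter (\<lambda>n. odd (int n - r)) (shifted_borel r phi)
           = 2 * fps_filter even bernoulli_fps * fps_filter (\<lambda>n. even (int n - r)) (shifted_borel r phi)"
proof (cases "even r")
  case True
  then have "(\<lambda>n. even (int n - r)) = even" "(\<lambda>n. odd (int n - r)) = odd"
    by auto
  with True show ?thesis
    by (simp add: exp_mult_reflect_eq_uminus_iff)
next
  case False
  then have "(\<lambda>n. even (int n - r)) = odd" "(\<lambda>n. odd (int n - r)) = even"
    by auto
  with False show ?thesis
    by (simp add: exp_mult_reflect_eq_iff)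
qed

definition tail_coeff_eq :: "int \<Rightarrow> 'a::field_char_0 fps \<Rightarrow> nat \<Rightarrow> bool" where
  "tail_coeff_eq r phi M \<longleftrightarrow>
     of_nat M * coeff_int phi (int M - r)
       = 2 * (\<Sum>j=0..M. if even (int j - r)
                        then of_nat (M choose j) * bernoulli_num (M - j) * coeff_int phi (int j + 1 - r)
                        else 0)"

lemma fact_times_X_mult_filter_shifted_borel_nth:
  "fact M * (fps_X * fps_filter (\<lambda>n. odd (int n - r)) (shifted_borel r phi)) $ M
     = (if even (int M - r) then of_nat M * coeff_int phi (int M - r) else (0 :: 'a::field_char_0))"
proof (cases M)
  case (Suc m)
  have "fact (Suc m) * (coeff_int phi (int m + 1 - r) / fact m) = of_nat (Suc m) * (coeff_int phi (int m + 1 - r) :: 'a)"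
    by (simp add: field_simps)
  with Suc show ?thesis
    by (auto simp: shifted_borel_nth add.commute[of 1])
qed simp

lemma fact_times_bernoulli_mult_filter_shifted_borel_nth:
  fixes phi :: "'a::field_char_0 fps"
  shows "fact M * (2 * fps_filter even bernoulli_fps * fps_filter (\<lambda>n. even (int n - r)) (shifted_borel r phi)) $ M
     = (if even (int M - r)
        then 2 * (\<Sum>j=0..M. if even (int j - r)
                  then of_nat (M choose j) * bernoulli_num (M - j) * coeff_int phi (int j + 1 - r) else 0)
        else 0)"
proof -
  let ?F = "fps_filter (\<lambda>n. even (int n - r)) (shifted_borel r phi)"
  have "fact M * (2 * fps_filter even bernoulli_fps * ?F) $ M
      = 2 * (\<Sum>j=0..M. fact M * (?F $ j * fps_filter even bernoulli_fps $ (M - j)))"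
  proof -
    have two: "2 * fps_filter even bernoulli_fps * ?F = fps_const 2 * (?F * fps_filter even bernoulli_fps)"
      by (simp add: fps_numeral_fps_const mult_ac)
    show ?thesis
      unfolding two fps_mult_left_const_nth unfolding fps_mult_nth by (simp add: sum_distrib_left mult_ac)
  qed
  also have "\<dots> = (if even (int M - r)
        then 2 * (\<Sum>j=0..M. if even (int j - r)
                  then of_nat (M choose j) * bernoulli_num (M - j) * coeff_int phi (int j + 1 - r) else 0)
        else 0)"
  proof (cases "even (int M - r)")
    case True
    have "fact M * (?F $ j * fps_filter even bernoulli_fps $ (M - j))
        = (if even (int j - r)
           then of_nat (M choose j) * bernoulli_num (M - j) * coeff_int phi (int j + 1 - r) else 0)"
      if "j \<le> M" for j
    proof -
      have "even (M - j) \<longleftrightarrow> even (int j - r)"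
        using True that by presburger
      with that show ?thesis
        by (simp add: shifted_borel_nth bernoulli_num_conv_fps binomial_fact field_simps)
    qed
    with True show ?thesis
      by simp
  next
    case False
    have vanish: "?F $ j * fps_filter even bernoulli_fps $ (M - j) = 0"
      if "j \<le> M" for j
    proof -
      have "even (M - j) \<longleftrightarrow> odd (int j - r)"
        using False that by presburger
      then show ?thesis
        by simp
    qed
    with False show ?thesis
      by (simp add: sum.neutral del: fps_filter_nth)
  qed
  finally show ?thesis .
qed

lemma filter_shifted_borel_eq_iff_tail_coeff_eq:
  fixes phi :: "'a::field_char_0 fps"
  shows "fps_X * fps_filter (\<lambda>n. odd (int n - r)) (shifted_borel r phi)
           = 2 * fps_filter even bernoulli_fps * fps_filter (\<lambda>n. even (int n - r)) (shifted_borel r phi)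
     \<longleftrightarrow> (\<forall>M. even (int M - r) \<longrightarrow> tail_coeff_eq r phi M)"
proof -
  let ?L = "fps_X * fps_filter (\<lambda>n. odd (int n - r)) (shifted_borel r phi)"
  let ?R = "2 * fps_filter even bernoulli_fps * fps_filter (\<lambda>n. even (int n - r)) (shifted_borel r phi)"
  have "?L $ M = ?R $ M \<longleftrightarrow> fact M * ?L $ M = fact M * ?R $ M" for M
    by (simp only: mult_cancel_left fact_nonzero simp_thms)
  also have "\<dots> M \<longleftrightarrow> (even (int M - r) \<longrightarrow> tail_coeff_eq r phi M)" for M
    unfolding fact_times_X_mult_filter_shifted_borel_nth fact_times_bernoulli_mult_filter_shifted_borel_nth
    by (simp add: tail_coeff_eq_def)
  finally show ?thesis
    by (simp only: fps_eq_iff)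
qed

definition tail_recurrence :: "'a::field_char_0 fps \<Rightarrow> int \<Rightarrow> int \<Rightarrow> int \<Rightarrow> bool" where
  "tail_recurrence phi r k n \<longleftrightarrow>
     coeff_int phi (2 * n) = 2 / of_int (2 * n + r) *
       (\<Sum>i\<in>{-k..n}. of_nat (nat (2 * n + r) choose nat (2 * i + r))
          * bernoulli_num (nat (2 * n - 2 * i)) * coeff_int phi (2 * i + 1))"

lemma tail_coeff_eq_iff_tail_recurrence:
  fixes phi :: "'a::field_char_0 fps"
  assumes k: "k = r div 2" and pos: "1 \<le> 2 * n + r"
  shows "tail_coeff_eq r phi (nat (2 * n + r)) \<longleftrightarrow> tail_recurrence phi r k n"
proof -
  define M where "M = nat (2 * n + r)"
  have M: "int M = 2 * n + r"
    using pos by (simp add: M_def)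
  have "(\<Sum>j=0..M. if even (int j - r)
          then of_nat (M choose j) * bernoulli_num (M - j) * coeff_int phi (int j + 1 - r) else 0)
      = (\<Sum>i\<in>{-k..n}. of_nat (M choose nat (2 * i + r))
          * bernoulli_num (nat (2 * n - 2 * i)) * coeff_int phi (2 * i + 1))"
    unfolding sum_if_even_diff_reindex[OF k M]
  proof (intro sum.cong refl)
    fix i assume "i \<in> {-k..n}"
    then have e: "M - nat (2 * i + r) = nat (2 * n - 2 * i)" "int (nat (2 * i + r)) + 1 - r = 2 * i + 1"
      using k M by auto
    show "of_nat (M choose nat (2 * i + r)) * bernoulli_num (M - nat (2 * i + r))
          * coeff_int phi (int (nat (2 * i + r)) + 1 - r)
        = of_nat (M choose nat (2 * i + r)) * bernoulli_num (nat (2 * n - 2 * i)) * coeff_int phi (2 * i + 1)"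
      unfolding e by (rule refl)
  qed
  moreover have "(of_int (2 * n + r) :: 'a) \<noteq> 0"
    using pos by (simp only: of_int_eq_0_iff)
  moreover have "(of_nat M :: 'a) = of_int (2 * n + r)" "int M - r = 2 * n"
    using M by (metis of_int_of_nat_eq, simp)
  ultimately show ?thesis
    unfolding tail_coeff_eq_def tail_recurrence_def M_def[symmetric]
    by (simp add: nonzero_eq_divide_eq mult.commute)
qed

lemma tail_coeff_eq_0_iff: "even r \<Longrightarrow> tail_coeff_eq r phi 0 \<longleftrightarrow> coeff_int phi (1 - r) = 0"
  by (simp add: tail_coeff_eq_def bernoulli_num_conv_fps)

lemma tail_coeff_eq_below:
  assumes "int M + 2 \<le> r"
  shows "tail_coeff_eq r phi M"
proof -
  have "coeff_int phi (int j + 1 - r) = 0" if "j \<in> {0..M}" for j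
    using assms that by (simp add: coeff_int_neg)
  with assms show ?thesis
    by (simp add: tail_coeff_eq_def coeff_int_neg sum.neutral)
qed

lemma tail_coeff_eqs_iff_tail_recurrences:
  fixes phi :: "'a::field_char_0 fps"
  shows "(\<forall>M. even (int M - r) \<longrightarrow> tail_coeff_eq r phi M)
     \<longleftrightarrow> (\<forall>n. 0 \<le> n \<and> 1 \<le> 2 * n + r \<longrightarrow> tail_recurrence phi r (r div 2) n)
       \<and> (even r \<and> r \<le> 0 \<longrightarrow> coeff_int phi (1 - r) = 0)"
proof (intro iffI conjI allI impI)
  assume H: "\<forall>M. even (int M - r) \<longrightarrow> tail_coeff_eq r phi M"
  fix n assume n: "0 \<le> n \<and> 1 \<le> 2 * n + r"
  then have "even (int (nat (2 * n + r)) - r)"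
    by simp
  with H have "tail_coeff_eq r phi (nat (2 * n + r))"
    by blast
  with n show "tail_recurrence phi r (r div 2) n"
    using tail_coeff_eq_iff_tail_recurrence[of "r div 2" r n phi] by simp
next
  assume "\<forall>M. even (int M - r) \<longrightarrow> tail_coeff_eq r phi M" "even r \<and> r \<le> 0"
  then show "coeff_int phi (1 - r) = 0"
    using tail_coeff_eq_0_iff[of r phi] by simp
next
  assume H: "(\<forall>n. 0 \<le> n \<and> 1 \<le> 2 * n + r \<longrightarrow> tail_recurrence phi r (r div 2) n)
       \<and> (even r \<and> r \<le> 0 \<longrightarrow> coeff_int phi (1 - r) = 0)"
  fix M assume M: "even (int M - r)"
  show "tail_coeff_eq r phi M"
  proof (cases "M = 0")
    case True
    then have "even r"
      using M by simp
    moreover have "coeff_int phi (1 - r) = 0"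
    proof (cases "r \<le> 0")
      case False
      with \<open>even r\<close> have "1 - r < 0"
        by presburger
      then show ?thesis
        by (rule coeff_int_neg)
    qed (use H \<open>even r\<close> in simp)
    ultimately show ?thesis
      using tail_coeff_eq_0_iff[of r phi] True by simp
  next
    case False
    define n where "n = (int M - r) div 2"
    have n: "2 * n = int M - r"
      using M by (simp add: n_def)
    show ?thesis
    proof (cases "0 \<le> n")
      case True
      then show ?thesis
        using H tail_coeff_eq_iff_tail_recurrence[of "r div 2" r n phi] n False by simp
    next
      case False
      with n show ?thesis
        by (intro tail_coeff_eq_below) simp
    qed
  qed
qed

section \<open>The equations of index at most -r\<close>

definition head_weights :: "nat \<Rightarrow> 'a::field_char_0 fps \<Rightarrow> 'a fps" where
  "head_weights L phi = Abs_fps (\<lambda>j. if j \<le> L then fact (L - j) * phi $ j else 0)"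

lemma head_weights_nth: "head_weights L phi $ j = (if j \<le> L then fact (L - j) * phi $ j else 0)"
  by (simp add: head_weights_def)

text \<open>For \<open>r = -L\<close> and \<open>n \<le> L\<close>, multiplying the coefficient equation by \<open>(L - n)!\<close>
  turns \<open>binom(L - j, n - j)\<close> into \<open>(L - j)! / (n - j)!\<close>, a coefficient of a product with
  \<open>e\<^sup>-\<^sup>x\<close>.\<close>
lemma in_F_coeff_eq_head_iff:
  fixes phi :: "'a::field_char_0 fps"
  assumes r: "r = - int L" and n: "n \<le> L"
  shows "in_F_coeff_eq r phi n
     \<longleftrightarrow> (head_weights L phi - fps_exp (-1) * (head_weights L phi oo - fps_X)) $ n = 0"
proof -
  have binom: "fact (L - n) * ((- of_int r - of_nat j :: 'a) gchoose (n - j)) = fact (L - j) / fact (n - j)"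
    if "j \<le> n" for j
  proof -
    have "(- of_int r - of_nat j :: 'a) = of_nat (L - j)"
      using that r n by (simp add: of_nat_diff)
    then have "(- of_int r - of_nat j :: 'a) gchoose (n - j) = of_nat ((L - j) choose (n - j))"
      by (simp add: binomial_gbinomial)
    also have "\<dots> = fact (L - j) / (fact (n - j) * fact (L - n))"
    proof -
      have "n - j \<le> L - j" "L - j - (n - j) = L - n"
        using that n by arith+
      then show ?thesis
        by (simp add: binomial_fact)
    qed
    finally show ?thesis
      by simp
  qed
  have "(fps_exp (-1) * (head_weights L phi oo - fps_X)) $ n
      = (\<Sum>j=0..n. (head_weights L phi oo - fps_X) $ j * fps_exp (-1) $ (n - j))"
    by (simp add: fps_mult_nth mult.commute[of "fps_exp (-1)"])
  also have "\<dots> = (-1) ^ n * (\<Sum>j=0..n. fact (L - n) * ((- of_int r - of_nat j) gchoose (n - j)) * phi $ j)"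
    unfolding sum_distrib_left
  proof (intro sum.cong refl)
    fix j assume "j \<in> {0..n}"
    then have "j \<le> n"
      by simp
    have "(-1) ^ j * (-1) ^ (n - j) = ((-1) ^ n :: 'a)"
      using \<open>j \<le> n\<close> by (simp flip: power_add)
    moreover have "(head_weights L phi oo - fps_X) $ j * fps_exp (-1) $ (n - j)
        = ((-1) ^ j * (-1) ^ (n - j)) * (fact (L - j) / fact (n - j) * phi $ j)"
      using n \<open>j \<le> n\<close> by (simp add: head_weights_nth fps_exp_def)
    ultimately show "(head_weights L phi oo - fps_X) $ j * fps_exp (-1) $ (n - j)
        = (-1) ^ n * (fact (L - n) * ((- of_int r - of_nat j) gchoose (n - j)) * phi $ j)"
      by (simp only: binom[OF \<open>j \<le> n\<close>])
  qed
  finally have "(fps_exp (-1) * (head_weights L phi oo - fps_X)) $ n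
      = fact (L - n) * ((-1) ^ n * (\<Sum>j=0..n. ((- of_int r - of_nat j) gchoose (n - j)) * phi $ j))"
    by (simp add: sum_distrib_left mult_ac)
  then show ?thesis
    using n by (simp add: in_F_coeff_eq_def head_weights_nth)
qed

lemma in_F_coeff_eqs_head_iff:
  fixes phi :: "'a::field_char_0 fps"
  assumes r: "r = - int L"
  shows "(\<forall>n\<le>L. in_F_coeff_eq r phi n)
     \<longleftrightarrow> (\<forall>m\<le>L. (fps_X * fps_filter even (head_weights L phi)
               + 2 * fps_filter even bernoulli_fps * fps_filter odd (head_weights L phi)) $ m = 0)"
proof -
  let ?W = "head_weights L phi"
  let ?Z = "?W - fps_exp (-1) * (?W oo - fps_X)"
  have eZ: "fps_exp 1 * ?Z = fps_exp 1 * ((?W oo - fps_X) oo - fps_X) - (?W oo - fps_X)"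
  proof -
    have "fps_exp 1 * fps_exp (-1) = (1 :: 'a fps)"
      by (simp flip: fps_exp_add_mult)
    then show ?thesis
      by (simp add: algebra_simps flip: mult.assoc)
  qed
  have BeZ: "bernoulli_fps * (fps_exp 1 * ?Z)
      = fps_X * fps_filter even ?W + 2 * fps_filter even bernoulli_fps * fps_filter odd ?W"
    unfolding eZ bernoulli_fps_times_exp_reflect_minus by simp
  have "(\<forall>n\<le>L. in_F_coeff_eq r phi n) \<longleftrightarrow> (\<forall>n\<le>L. ?Z $ n = 0)"
    using in_F_coeff_eq_head_iff[OF r] by auto
  also have "\<dots> \<longleftrightarrow> (\<forall>n\<le>L. (fps_exp 1 * ?Z) $ n = 0)"
    by (rule fps_mult_unit_low_coeffs_zero_iff[symmetric]) simp
  also have "\<dots> \<longleftrightarrow> (\<forall>n\<le>L. (bernoulli_fps * (fps_exp 1 * ?Z)) $ n = 0)"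
    by (rule fps_mult_unit_low_coeffs_zero_iff[symmetric]) simp
  finally show ?thesis
    unfolding BeZ .
qed

definition head_recurrence :: "'a::field_char_0 fps \<Rightarrow> int \<Rightarrow> int \<Rightarrow> bool" where
  "head_recurrence phi r n \<longleftrightarrow>
     coeff_int phi (2*n) =
       (\<Sum>i\<in>{0..n}. 2 / of_int (2*i + r)
          * of_nat (nat (- 2*i - r) choose nat (- 2*n - r))
          * bernoulli_num (nat (2*n - 2*i)) * coeff_int phi (2*i + 1))"

lemma head_recurrence_summand:
  fixes phi :: "'a::field_char_0 fps"
  assumes r: "r = - int L" and i: "i \<le> n" and n: "2*n + 1 \<le> L"
  shows "bernoulli_fps $ (2*n - 2*i) * (fact (L - (2*i+1)) * phi $ (2*i+1))
       = - (fact (L - 2*n) / 2) * (2 / of_int (2*int i + r)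
           * of_nat (nat (- 2*int i - r) choose nat (- 2*int n - r))
           * bernoulli_num (nat (2*int n - 2*int i)) * coeff_int phi (2*int i + 1))"
proof -
  have e: "nat (- 2 * int i - r) = L - 2*i" "nat (- 2 * int n - r) = L - 2*n"
      "nat (2 * int n - 2 * int i) = 2*n - 2*i" "coeff_int phi (2 * int i + 1) = phi $ (2*i+1)"
      "(of_int (2 * int i + r) :: 'a) = - of_nat (L - 2*i)"
    using i n r by (auto simp: of_nat_diff intro: coeff_int_eq_nth)
  have "(of_nat (L - 2*i) :: 'a) \<noteq> 0"
    using i n by (simp only: of_nat_eq_0_iff)
  moreover have "- (f / 2) * (2 / (- x) * c * (g * b) * p) = f * (c * g) / x * (b * p)"
    if "x \<noteq> 0" for f x c g b p :: 'a
    using that by (simp add: field_simps)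
  ultimately have "- (fact (L - 2*n) / 2) * (2 / of_int (2*int i + r)
           * of_nat (nat (- 2*int i - r) choose nat (- 2*int n - r))
           * bernoulli_num (nat (2*int n - 2*int i)) * coeff_int phi (2*int i + 1))
      = fact (L - 2*n) * (of_nat ((L - 2*i) choose (L - 2*n)) * fact (2*n - 2*i)) / of_nat (L - 2*i)
          * (bernoulli_fps $ (2*n - 2*i) * phi $ (2*i+1))"
    unfolding e bernoulli_num_conv_fps by blast
  also have "fact (L - 2*n) * (of_nat ((L - 2*i) choose (L - 2*n)) * fact (2*n - 2*i)) / of_nat (L - 2*i)
      = (fact (L - (2*i+1)) :: 'a)"
    using i n by (subst fact_times_binomial_div) auto
  finally show ?thesis
    by (simp add: mult_ac)
qed

lemma head_coeff_odd_iff_head_recurrence: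
  fixes phi :: "'a::field_char_0 fps"
  assumes r: "r = - int L" and n: "2*n + 1 \<le> L"
  shows "(fps_X * fps_filter even (head_weights L phi)
            + 2 * fps_filter even bernoulli_fps * fps_filter odd (head_weights L phi)) $ (2*n+1) = 0
     \<longleftrightarrow> head_recurrence phi r (int n)"
proof -
  let ?T = "\<lambda>i::int. 2 / of_int (2*i + r) * of_nat (nat (- 2*i - r) choose nat (- 2*int n - r))
                 * bernoulli_num (nat (2*int n - 2*i)) * coeff_int phi (2*i + 1) :: 'a"
  have X_part: "(fps_X * fps_filter even (head_weights L phi)) $ (2*n+1) = fact (L - 2*n) * phi $ (2*n)"
    using n by (simp add: head_weights_nth)
  have "(fps_filter odd (head_weights L phi) * fps_filter even bernoulli_fps) $ (2*n+1)
      = (\<Sum>j=0..2*n+1. if odd j then head_weights L phi $ j * bernoulli_fps $ (2*n+1 - j) else 0)"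
    unfolding fps_mult_nth by (intro sum.cong refl) auto
  also have "\<dots> = (\<Sum>i=0..n. head_weights L phi $ (2*i+1) * bernoulli_fps $ (2*n+1 - (2*i+1)))"
    by (rule sum_if_odd_reindex)
  also have "\<dots> = (\<Sum>i=0..n. bernoulli_fps $ (2*n - 2*i) * (fact (L - (2*i+1)) * phi $ (2*i+1)))"
    using n by (intro sum.cong refl) (simp add: head_weights_nth)
  also have "\<dots> = - (fact (L - 2*n) / 2) * (\<Sum>i=0..n. ?T (int i))"
    unfolding sum_distrib_left by (intro sum.cong refl head_recurrence_summand[OF r _ n]) simp
  finally have odd_part: "(2 * fps_filter even bernoulli_fps * fps_filter odd (head_weights L phi)) $ (2*n+1)
      = - (fact (L - 2*n) * (\<Sum>i=0..n. ?T (int i)))"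
    by (simp add: mult.commute[of "fps_filter even bernoulli_fps"] mult.assoc fps_numeral_fps_const)
  have coeff: "coeff_int phi (2 * int n) = phi $ (2*n)"
    by (rule coeff_int_eq_nth) simp
  show ?thesis
    unfolding fps_add_nth X_part odd_part head_recurrence_def sum_int_atLeastAtMost_nat coeff
    by (simp only: add_uminus_conv_diff flip: right_diff_distrib) simp
qed

lemma in_F_coeff_eqs_head_iff_head_recurrences:
  fixes phi :: "'a::field_char_0 fps"
  assumes "r \<le> 0"
  shows "(\<forall>n. int n \<le> - r \<longrightarrow> in_F_coeff_eq r phi n)
     \<longleftrightarrow> (\<forall>n. 0 \<le> n \<and> n \<le> - (r div 2) - 1 \<longrightarrow> head_recurrence phi r n)"
proof -
  define L where "L = nat (- r)"
  have r: "r = - int L"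
    using assms by (simp add: L_def)
  let ?C = "fps_X * fps_filter even (head_weights L phi)
              + 2 * fps_filter even bernoulli_fps * fps_filter odd (head_weights L phi)"
  have "(\<forall>n. int n \<le> - r \<longrightarrow> in_F_coeff_eq r phi n) \<longleftrightarrow> (\<forall>m\<le>L. ?C $ m = 0)"
    using in_F_coeff_eqs_head_iff[OF r, of phi] r by simp
  also have "\<dots> \<longleftrightarrow> (\<forall>n. 2 * n + 1 \<le> L \<longrightarrow> ?C $ (2 * n + 1) = 0)"
    using X_mult_filter_even_plus_bernoulli_mult_filter_odd_nth_even[of _ "head_weights L phi"]
    by (metis oddE)
  also have "\<dots> \<longleftrightarrow> (\<forall>n. 2 * n + 1 \<le> L \<longrightarrow> head_recurrence phi r (int n))"
    using head_coeff_odd_iff_head_recurrence[OF r] by blast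
  also have "\<dots> \<longleftrightarrow> (\<forall>n. 0 \<le> n \<and> n \<le> - (r div 2) - 1 \<longrightarrow> head_recurrence phi r n)"
  proof -
    have "2 * n + 1 \<le> L \<longleftrightarrow> int n \<le> - (r div 2) - 1" for n
      using r by presburger
    then show ?thesis
      by (metis nonneg_int_cases of_nat_0_le_iff)
  qed
  finally show ?thesis .
qed

lemma in_F_iff_recurrences:
  fixes phi :: "'a::field_char_0 fps"
  shows "in_F r phi \<longleftrightarrow>
     (\<forall>n. 0 \<le> n \<and> 1 \<le> 2 * n + r \<longrightarrow> tail_recurrence phi r (r div 2) n)
   \<and> (even r \<and> r \<le> 0 \<longrightarrow> coeff_int phi (1 - r) = 0)
   \<and> (r \<le> 0 \<longrightarrow> (\<forall>n. 0 \<le> n \<and> n \<le> - (r div 2) - 1 \<longrightarrow> head_recurrence phi r n))"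
proof -
  have "in_F r phi \<longleftrightarrow>
      (\<forall>n. 1 - r \<le> int n \<longrightarrow> in_F_coeff_eq r phi n) \<and> (\<forall>n. int n \<le> - r \<longrightarrow> in_F_coeff_eq r phi n)"
    unfolding in_F_iff_coeff_eq by force
  moreover have "(\<forall>n. int n \<le> - r \<longrightarrow> in_F_coeff_eq r phi n) \<longleftrightarrow>
      (r \<le> 0 \<longrightarrow> (\<forall>n. 0 \<le> n \<and> n \<le> - (r div 2) - 1 \<longrightarrow> head_recurrence phi r n))"
    using in_F_coeff_eqs_head_iff_head_recurrences[of r phi] by force
  ultimately show ?thesis
    by (simp only: in_F_coeff_eq_tail_iff exp_mult_shifted_borel_reflect_iff_filter
        filter_shifted_borel_eq_iff_tail_coeff_eq tail_coeff_eqs_iff_tail_recurrences conj_assoc)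
qed

theorem theorem5p9:
  fixes phi :: "'a::field_char_0 fps" and r :: int
  defines "\<gamma> \<equiv> coeff_int phi"
  defines "star \<equiv> (\<lambda>k n::int. \<gamma> (2*n) =
              2 / of_int (2*n + r) *
              (\<Sum>i\<in>{-k..n}. of_nat (nat (2*n + r) choose nat (2*i + r))
                   * bernoulli_num (nat (2*n - 2*i)) * \<gamma> (2*i + 1)))"
  defines "starstar \<equiv> (\<lambda>n::int. \<gamma> (2*n) =
              (\<Sum>i\<in>{0..n}. 2 / of_int (2*i + r)
                   * of_nat (nat (- 2*i - r) choose nat (- 2*n - r))
                   * bernoulli_num (nat (2*n - 2*i)) * \<gamma> (2*i + 1)))"
  shows "in_F r phi \<longleftrightarrow>
    (if even r then
       (let k = r div 2 in
          (\<forall>n. n \<ge> max 0 (1 - k) \<longrightarrow> star k n)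
        \<and> (r \<le> 0 \<longrightarrow> \<gamma> (1 - r) = 0)
        \<and> (r < 0 \<longrightarrow> (\<forall>n. 0 \<le> n \<and> n \<le> - k - 1 \<longrightarrow> starstar n)))
     else
       (let k = (r - 1) div 2 in
          (\<forall>n. n \<ge> max 0 (- k) \<longrightarrow> star k n)
        \<and> (r < 0 \<longrightarrow> (\<forall>n. 0 \<le> n \<and> n \<le> - k - 1 \<longrightarrow> starstar n))))"
proof -
  have "star = tail_recurrence phi r" "starstar = head_recurrence phi r"
    unfolding star_def starstar_def \<gamma>_def tail_recurrence_def head_recurrence_def by (intro ext refl)+
  then have in_F_iff: "in_F r phi \<longleftrightarrow>
     (\<forall>n. 0 \<le> n \<and> 1 \<le> 2 * n + r \<longrightarrow> star (r div 2) n)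
   \<and> (even r \<and> r \<le> 0 \<longrightarrow> \<gamma> (1 - r) = 0)
   \<and> (r < 0 \<longrightarrow> (\<forall>n. 0 \<le> n \<and> n \<le> - (r div 2) - 1 \<longrightarrow> starstar n))"
    unfolding in_F_iff_recurrences \<gamma>_def by (cases "r = 0") auto
  show ?thesis
  proof (cases "even r")
    case True
    then have "max 0 (1 - r div 2) \<le> n \<longleftrightarrow> 0 \<le> n \<and> 1 \<le> 2 * n + r" for n
      by presburger
    with True show ?thesis
      unfolding in_F_iff Let_def if_P[OF True] by simp
  next
    case False
    then have "max 0 (- ((r - 1) div 2)) \<le> n \<longleftrightarrow> 0 \<le> n \<and> 1 \<le> 2 * n + r" for n
      by presburger
    moreover have "(r - 1) div 2 = r div 2"
      using False by presburger
    ultimately show ?thesis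
      using False unfolding in_F_iff Let_def if_not_P[OF False] by simp
  qed
qed

end
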